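(* Let $N$ be a positive integer and let the edges of the complete $4$-uniform hypergraph $\mathcal{K}^4_N$ be colored red and blue. Let $\mathcal{P}=e_1e_2\ldots e_n$ be a red loose path which is maximal with respect to a set $W\subseteq V(\mathcal{K}^4_N)\setminus V(\mathcal{P})$ with $|W|\ge 4$. Then for every two consecutive edges $e_j,e_{j+1}$ of $\mathcal{P}$ there exist distinct vertices $x,y\in W$ and distinct vertices $a_1,\dots,a_5\in e_j\cup e_{j+1}$ such that the edges $f=\{x,a_1,a_2,a_3\}$ and $g=\{a_3,a_4,a_5,y\}$ are both blue (so $fg$ is a blue loose path with two edges), and at least one vertex of $e_{j+1}\setminus e_j$ does not belong to $S=\{a_1,\dots,a_5\}$. Moreover, there are subsets $W_1,W_2\subseteq W$ with $|W_1|\ge |W|-2$ and $|W_2|\ge |W|-3$ such that for all distinct $x'\in W_1$ and $y'\in W_2$ the edges $(f\setminus\{x\})\cup\{x'\}$ and $(g\setminus\{y\})\cup\{y'\}$ are both blue.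
   Context: A $4$-uniform loose path $\mathcal{P}=e_1e_2\ldots e_n$ (a copy of $\mathcal{P}^4_n$) has vertex set $\{v_1,\dots,v_{3n+1}\}$ and edges $e_i=\{v_{3i-2},v_{3i-1},v_{3i},v_{3i+1}\}$, $1\le i\le n$; the first vertex of $e_i$ is $f_{\mathcal{P},e_i}=v_{3i-2}$ and its last vertex is $l_{\mathcal{P},e_i}=v_{3i+1}$. A red path is one all of whose edges are red; $\|\mathcal{P}\|$ denotes the number of edges. A red path $\mathcal{P}=e_1\ldots e_n$ is maximal with respect to $W\subseteq V\setminus V(\mathcal{P})$ if there is no $W'\subseteq W$, no $1\le r\le n$ and no $1\le i\le n-r+1$ such that $\mathcal{P}'=e_1\ldots e_{i-1}e'_ie'_{i+1}\ldots e'_{i+r}e_{i+r}\ldots e_n$ (the edges $e_i,\dots,e_{i+r-1}$ replaced by $r+1$ new edges $e'_i,\dots,e'_{i+r}$) is a red loose path with $n+1$ edges satisfying: (i) $V(\mathcal{P}')=V(\mathcal{P})\cup W'$; (ii) if $i=1$ then $f_{\mathcal{P}',e'_i}=f_{\mathcal{P},e_i}$; (iii) if $i+r-1=n$ then $l_{\mathcal{P}',e'_{i+r}}=l_{\mathcal{P},e_n}$. *)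

theory Defs
  imports Main
begin

text \<open>A 4-uniform loose path with n edges is represented by its vertex list
  vs = [v_1, ..., v_{3n+1}] (0-based in Isabelle). The colouring of the complete
  4-uniform hypergraph on V is given by the predicate red (blue = not red).\<close>

definition lp_edge :: "'a list \<Rightarrow> nat \<Rightarrow> 'a set" where
  "lp_edge vs i = {vs ! k | k. 3 * (i - 1) \<le> k \<and> k \<le> 3 * i}"

definition loose_path :: "'a set \<Rightarrow> 'a list \<Rightarrow> nat \<Rightarrow> bool" where
  "loose_path V vs n \<longleftrightarrow> length vs = 3 * n + 1 \<and> distinct vs \<and> set vs \<subseteq> V"

definition red_path :: "('a set \<Rightarrow> bool) \<Rightarrow> 'a list \<Rightarrow> nat \<Rightarrow> bool" where
  "red_path red vs n \<longleftrightarrow> (\<forall>i. 1 \<le> i \<and> i \<le> n \<longrightarrow> red (lp_edge vs i))"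

text \<open>Maximality of the red path vs (with n edges) with respect to W.
  The new path ws has n+1 edges: edges 1..i-1 are e_1..e_{i-1},
  edges i..i+r are new, and edge k (i+r < k \<le> n+1) is e_{k-1}.\<close>

definition maximal_wrt ::
  "'a set \<Rightarrow> ('a set \<Rightarrow> bool) \<Rightarrow> 'a list \<Rightarrow> nat \<Rightarrow> 'a set \<Rightarrow> bool" where
  "maximal_wrt V red vs n W \<longleftrightarrow>
     \<not> (\<exists>W' ws r i. W' \<subseteq> W \<and> 1 \<le> r \<and> r \<le> n \<and> 1 \<le> i \<and> i \<le> n - r + 1 \<and>
          loose_path V ws (n + 1) \<and> red_path red ws (n + 1) \<and>
          (\<forall>k. 1 \<le> k \<and> k < i \<longrightarrow> lp_edge ws k = lp_edge vs k) \<and>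
          (\<forall>k. i + r < k \<and> k \<le> n + 1 \<longrightarrow> lp_edge ws k = lp_edge vs (k - 1)) \<and>
          set ws = set vs \<union> W' \<and>
          (i = 1 \<longrightarrow> ws ! 0 = vs ! 0) \<and>
          (i + r - 1 = n \<longrightarrow> ws ! (3 * (n + 1)) = vs ! (3 * n)))"

end

theory Submission
  imports Defs
begin

text \<open>Write \<open>u\<^sub>0, \<dots>, u\<^sub>6\<close> for the vertices of \<open>e\<^sub>j \<union> e\<^sub>j\<^sub>+\<^sub>1\<close> in path order and call a
  triple of them \<open>few-red\<close> if at most two vertices \<open>w \<in> W\<close> complete it to a red edge.
  For every reordering \<open>u\<^sub>0, u\<^sub>p\<^sub>1, \<dots>, u\<^sub>p\<^sub>5, u\<^sub>6\<close> of these vertices one of the triples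
  \<open>{u\<^sub>0, u\<^sub>p\<^sub>1, u\<^sub>p\<^sub>2}\<close>, \<open>{u\<^sub>p\<^sub>2, u\<^sub>p\<^sub>3, u\<^sub>p\<^sub>4}\<close>, \<open>{u\<^sub>p\<^sub>4, u\<^sub>p\<^sub>5, u\<^sub>6}\<close> is few-red:
  otherwise distinct red completions \<open>w\<^sub>1, w\<^sub>2, w\<^sub>3\<close> turn \<open>e\<^sub>j e\<^sub>j\<^sub>+\<^sub>1\<close> into three red
  edges with the same end vertices, contradicting maximality. Three well-chosen reorderings
  then force two few-red triples that share exactly one vertex and miss one of
  \<open>u\<^sub>4, u\<^sub>5, u\<^sub>6\<close>; deleting their at most two red completions from \<open>W\<close> gives
  \<open>W\<^sub>1\<close> and \<open>W\<^sub>2\<close>.\<close>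

lemma lp_edge_eq_image: "lp_edge xs i = (\<lambda>k. xs ! k) ` {3*(i-1)..3*i}"
  unfolding lp_edge_def by auto

lemma lp_edge_eq_four:
  assumes "1 \<le> i"
  shows "lp_edge xs i = {xs ! (3*(i-1)), xs ! (3*(i-1) + 1), xs ! (3*(i-1) + 2), xs ! (3*(i-1) + 3)}"
proof -
  have "{3*(i-1)..3*i} = {3*(i-1), 3*(i-1) + 1, 3*(i-1) + 2, 3*(i-1) + 3}" using assms by auto
  then show ?thesis by (simp add: lp_edge_eq_image)
qed

lemma lp_edge_add_eq_image:
  assumes "1 \<le> i"
  shows "lp_edge xs (d + i) = (\<lambda>k. xs ! (3*d + k)) ` {3*(i-1)..3*i}"
proof -
  have "{3*(d+i-1)..3*(d+i)} = (+) (3*d) ` {3*(i-1)..3*i}"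
    using assms by (simp add: algebra_simps)
  then show ?thesis unfolding lp_edge_eq_image by (simp only: image_comp comp_def)
qed

lemma lp_edge_eq_shift:
  assumes "1 \<le> i" and "\<And>k. 3*(i-1) \<le> k \<Longrightarrow> k \<le> 3*i \<Longrightarrow> xs ! (3*d + k) = ys ! (3*e + k)"
  shows "lp_edge xs (d + i) = lp_edge ys (e + i)"
  using assms by (auto simp: lp_edge_add_eq_image intro!: image_cong)

lemma loose_path_window:
  fixes vs :: "'a list"
  assumes "loose_path V vs n" and "1 \<le> j" and "j < n"
  defines "u \<equiv> \<lambda>k. vs ! (3*(j-1) + k)"
  shows "inj_on u {0..6}" and "u ` {0..6} \<subseteq> set vs"
    and "lp_edge vs j = u ` {0..3}" and "lp_edge vs (j + 1) = u ` {3..6}"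
proof -
  have idx: "3*(j-1) + k < length vs" if "k \<le> 6" for k
    using assms(1-3) that by (simp add: loose_path_def)
  show "inj_on u {0..6}"
    using assms(1) idx by (auto simp: inj_on_def u_def loose_path_def nth_eq_iff_index_eq)
  show "u ` {0..6} \<subseteq> set vs" using idx by (auto simp: u_def)
  show "lp_edge vs j = u ` {0..3}"
    using lp_edge_add_eq_image[of 1 vs "j-1"] assms(2) by (simp add: u_def)
  show "lp_edge vs (j + 1) = u ` {3..6}"
    using lp_edge_add_eq_image[of 2 vs "j-1"] assms(2) by (simp add: u_def)
qed

lemma nth_replace_segment:
  fixes xs ys :: "'a list" and b m d :: nat
  defines "zs \<equiv> take b xs @ ys @ drop (b + m + 1) xs"
  assumes fits: "b + m + 1 \<le> length xs" and len_ys: "length ys = m + d + 1"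
    and first: "ys ! 0 = xs ! b" and last: "ys ! (m + d) = xs ! (b + m)"
  shows "length zs = length xs + d"
    and "k \<le> b \<Longrightarrow> zs ! k = xs ! k"
    and "k < length ys \<Longrightarrow> zs ! (b + k) = ys ! k"
    and "b + m \<le> k \<Longrightarrow> k < length xs \<Longrightarrow> zs ! (d + k) = xs ! k"
proof -
  have len_pre: "length (take b xs) = b" using fits by simp
  show "length zs = length xs + d" using fits len_ys by (simp add: zs_def)
  show mid: "zs ! (b + k) = ys ! k" if "k < length ys" for k
    using that fits by (simp add: zs_def nth_append)
  show "zs ! k = xs ! k" if "k \<le> b" for k
  proof (cases "k < b")
    case True then show ?thesis using fits by (simp add: zs_def nth_append)
  next
    case False then show ?thesis using that mid[of 0] first len_ys by simp
  qed
  show "zs ! (d + k) = xs ! k" if "b + m \<le> k" "k < length xs" for k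
  proof (cases "k = b + m")
    case True then show ?thesis using mid[of "m + d"] last len_ys by (simp add: algebra_simps)
  next
    case False
    then have "d + k = length (take b xs @ ys) + (k - (b + m + 1))"
      using that len_pre len_ys by simp
    then show ?thesis using that False
      by (simp only: zs_def append_assoc[symmetric] nth_append_length_plus) simp
  qed
qed

lemma lp_edge_replace_segment:
  fixes vs mid :: "'a list" and j r :: nat
  defines "ws \<equiv> take (3*(j-1)) vs @ mid @ drop (3*(j-1) + 3*r + 1) vs"
  assumes j: "1 \<le> j" and fits: "3*(j-1) + 3*r + 1 \<le> length vs"
    and len_mid: "length mid = 3*(r+1) + 1"
    and first: "mid ! 0 = vs ! (3*(j-1))" and last: "mid ! (3*(r+1)) = vs ! (3*(j-1) + 3*r)"
  shows "1 \<le> k \<Longrightarrow> k < j \<Longrightarrow> lp_edge ws k = lp_edge vs k"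
    and "j \<le> k \<Longrightarrow> k \<le> j + r \<Longrightarrow> lp_edge ws k = lp_edge mid (k - j + 1)"
    and "j + r < k \<Longrightarrow> 3*(k-1) < length vs \<Longrightarrow> lp_edge ws k = lp_edge vs (k - 1)"
proof -
  have "length mid = 3*r + 3 + 1" "mid ! (3*r + 3) = vs ! (3*(j-1) + 3*r)"
    using len_mid last by (simp_all add: algebra_simps)
  note ws = nth_replace_segment[where b="3*(j-1)" and m="3*r" and d=3, OF fits this(1) first this(2),
      folded ws_def]
  show "lp_edge ws k = lp_edge vs k" if "1 \<le> k" "k < j"
    using lp_edge_eq_shift[of k ws 0 vs 0] that ws(2) by simp
  show "lp_edge ws k = lp_edge mid (k - j + 1)" if "j \<le> k" "k \<le> j + r"
    using lp_edge_eq_shift[of "k - j + 1" ws "j - 1" mid 0] that ws(3) len_mid j by simp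
  show "lp_edge ws k = lp_edge vs (k - 1)" if "j + r < k" "3*(k-1) < length vs"
  proof -
    have "lp_edge ws (1 + (k - 1)) = lp_edge vs (0 + (k - 1))"
      using that j by (intro lp_edge_eq_shift) (auto intro!: ws(4))
    then show ?thesis using that by simp
  qed
qed

lemma loose_path_replace_segment:
  fixes vs mid :: "'a list" and j r :: nat
  defines "ws \<equiv> take (3*(j-1)) vs @ mid @ drop (3*(j-1) + 3*r + 1) vs"
  assumes lp: "loose_path V vs n" and fits: "3*(j-1) + 3*r + 1 \<le> length vs"
    and len_mid: "length mid = 3*(r+1) + 1" and dist_mid: "distinct mid"
    and set_mid: "set mid = set (take (3*r+1) (drop (3*(j-1)) vs)) \<union> W'"
    and W': "W' \<subseteq> V - set vs"
  shows "loose_path V ws (n + 1)" and "set ws = set vs \<union> W'"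
proof -
  define pre where "pre = take (3*(j-1)) vs"
  define seg where "seg = take (3*r+1) (drop (3*(j-1)) vs)"
  define post where "post = drop (3*(j-1) + 3*r + 1) vs"
  have ws: "ws = pre @ mid @ post" by (simp add: ws_def pre_def post_def)
  have vs_split: "vs = pre @ seg @ post"
    unfolding pre_def seg_def post_def by (metis append_take_drop_id drop_drop add.commute)
  then have set_vs: "set vs = set pre \<union> set seg \<union> set post" by (metis set_append sup_assoc)
  have set_mid_seg: "set mid = set seg \<union> W'" using set_mid by (simp add: seg_def)
  show set_ws: "set ws = set vs \<union> W'" using set_mid_seg set_vs by (auto simp: ws)
  have "distinct (pre @ seg @ post)" using lp vs_split by (simp add: loose_path_def)
  moreover have "W' \<inter> (set pre \<union> set post) = {}" using W' set_vs by blast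
  ultimately have "distinct ws" using dist_mid set_mid_seg by (auto simp: ws)
  moreover have "length ws = 3*(n + 1) + 1" using lp fits len_mid by (simp add: ws_def loose_path_def)
  ultimately show "loose_path V ws (n + 1)" using lp W' set_ws by (auto simp: loose_path_def)
qed

lemma red_path_replace_segment:
  fixes vs mid :: "'a list" and j r :: nat
  defines "ws \<equiv> take (3*(j-1)) vs @ mid @ drop (3*(j-1) + 3*r + 1) vs"
  assumes rp: "red_path red vs n" and len_vs: "length vs = 3*n + 1"
    and j: "1 \<le> j" and jr: "j + r \<le> n + 1"
    and len_mid: "length mid = 3*(r+1) + 1"
    and first: "mid ! 0 = vs ! (3*(j-1))" and last: "mid ! (3*(r+1)) = vs ! (3*(j-1) + 3*r)"
    and red_mid: "\<And>i. 1 \<le> i \<Longrightarrow> i \<le> r + 1 \<Longrightarrow> red (lp_edge mid i)"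
  shows "red_path red ws (n + 1)"
  unfolding red_path_def
proof (intro allI impI)
  fix k assume k: "1 \<le> k \<and> k \<le> n + 1"
  have fits: "3*(j-1) + 3*r + 1 \<le> length vs" using jr j len_vs by simp
  note edges = lp_edge_replace_segment[OF j fits len_mid first last, folded ws_def]
  consider "k < j" | "j \<le> k" "k \<le> j + r" | "j + r < k" by linarith
  then show "red (lp_edge ws k)"
  proof cases
    case 1 then show ?thesis using k edges(1) rp jr by (simp add: red_path_def)
  next
    case 2 then show ?thesis using edges(2) red_mid by simp
  next
    case 3
    then have "1 \<le> k - 1 \<and> k - 1 \<le> n" using k j by linarith
    then show ?thesis using 3 k edges(3) rp len_vs by (simp add: red_path_def)
  qed
qed

lemma red_replacement_contradicts_maximal:
  assumes lp: "loose_path V vs n" and rp: "red_path red vs n"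
    and WV: "W \<subseteq> V - set vs" and mx: "maximal_wrt V red vs n W"
    and j: "1 \<le> j" and r: "1 \<le> r" and jr: "j + r \<le> n + 1"
    and len_mid: "length mid = 3*(r+1) + 1" and dist_mid: "distinct mid"
    and first: "mid ! 0 = vs ! (3*(j-1))" and last: "mid ! (3*(r+1)) = vs ! (3*(j-1) + 3*r)"
    and set_mid: "set mid = set (take (3*r+1) (drop (3*(j-1)) vs)) \<union> W'" and W': "W' \<subseteq> W"
    and red_mid: "\<And>i. 1 \<le> i \<Longrightarrow> i \<le> r + 1 \<Longrightarrow> red (lp_edge mid i)"
  shows False
proof -
  define ws where "ws = take (3*(j-1)) vs @ mid @ drop (3*(j-1) + 3*r + 1) vs"
  have len_vs: "length vs = 3*n + 1" using lp by (simp add: loose_path_def)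
  have fits: "3*(j-1) + 3*r + 1 \<le> length vs" using jr j len_vs by simp
  have "length mid = 3*r + 3 + 1" "mid ! (3*r + 3) = vs ! (3*(j-1) + 3*r)"
    using len_mid last by (simp_all add: algebra_simps)
  note ws = nth_replace_segment[where b="3*(j-1)" and m="3*r" and d=3, OF fits this(1) first this(2),
      folded ws_def]
  note edges = lp_edge_replace_segment[OF j fits len_mid first last, folded ws_def]
  have "W' \<subseteq> V - set vs" using W' WV by blast
  note path = loose_path_replace_segment[OF lp fits len_mid dist_mid set_mid this, folded ws_def]
  have "j + r - 1 = n \<longrightarrow> ws ! (3 * (n + 1)) = vs ! (3 * n)"
    using ws(4)[of "3*n"] len_vs j by (simp add: algebra_simps)
  moreover have "r \<le> n" "j \<le> n - r + 1" using j jr by linarith+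
  moreover note red_path_replace_segment[OF rp len_vs j jr len_mid first last red_mid, folded ws_def]
  ultimately have "\<exists>W' ws r i. W' \<subseteq> W \<and> 1 \<le> r \<and> r \<le> n \<and> 1 \<le> i \<and> i \<le> n - r + 1 \<and>
          loose_path V ws (n + 1) \<and> red_path red ws (n + 1) \<and>
          (\<forall>k. 1 \<le> k \<and> k < i \<longrightarrow> lp_edge ws k = lp_edge vs k) \<and>
          (\<forall>k. i + r < k \<and> k \<le> n + 1 \<longrightarrow> lp_edge ws k = lp_edge vs (k - 1)) \<and>
          set ws = set vs \<union> W' \<and>
          (i = 1 \<longrightarrow> ws ! 0 = vs ! 0) \<and>
          (i + r - 1 = n \<longrightarrow> ws ! (3 * (n + 1)) = vs ! (3 * n))"
    using W' j r edges(1,3) path ws(2)[of 0] len_vs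
    by (intro exI[of _ W'] exI[of _ ws] exI[of _ r] exI[of _ j] conjI allI impI) auto
  with mx show False unfolding maximal_wrt_def by blast
qed

definition few_red_extensions :: "'a set \<Rightarrow> ('a set \<Rightarrow> bool) \<Rightarrow> 'a set \<Rightarrow> bool" where
  "few_red_extensions W red T \<longleftrightarrow> card {w \<in> W. red (insert w T)} \<le> 2"

lemma distinct_representatives_3:
  assumes "finite X" "finite Y" "finite Z" "3 \<le> card X" "3 \<le> card Y" "3 \<le> card Z"
  obtains x y z where "x \<in> X" "y \<in> Y" "z \<in> Z" "distinct [x, y, z]"
proof -
  obtain x where x: "x \<in> X" using assms(4) by fastforce
  have "card Y - 1 \<le> card (Y - {x})" using diff_card_le_card_Diff[of "{x}" Y] by simp
  then have "0 < card (Y - {x})" using assms(5) by linarith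
  then obtain y where y: "y \<in> Y - {x}" by (auto simp: card_gt_0_iff)
  have "card Z - 2 \<le> card (Z - {x, y})"
    using diff_card_le_card_Diff[of "{x, y}" Z] card_insert_le_m1[of 2 "{y}" x] by simp
  then have "0 < card (Z - {x, y})" using assms(6) by linarith
  then obtain z where z: "z \<in> Z - {x, y}" by (auto simp: card_gt_0_iff)
  show thesis using that x y z by auto
qed

lemma card_without_few_red_extensions:
  assumes "finite W" and "few_red_extensions W red T"
  shows "card (W - {w \<in> W. red (insert w T)}) \<ge> card W - 2"
  using assms card_Diff_subset[of "{w \<in> W. red (insert w T)}" W]
  by (simp add: few_red_extensions_def)

lemma blue_two_path_of_few_red_extensions:
  assumes "finite W" and "4 \<le> card W" and "W \<inter> {a1, a2, a3, a4, a5} = {}"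
    and "few_red_extensions W red {a1, a2, a3}" and "few_red_extensions W red {a3, a4, a5}"
  obtains x y W1 W2 where "x \<in> W" "y \<in> W" "x \<noteq> y" "\<not> red {x, a1, a2, a3}" "\<not> red {a3, a4, a5, y}"
    and "W1 \<subseteq> W" "W2 \<subseteq> W" "card W1 \<ge> card W - 2" "card W2 \<ge> card W - 3"
    and "\<And>x'. x' \<in> W1 \<Longrightarrow> \<not> red (({x, a1, a2, a3} - {x}) \<union> {x'})"
    and "\<And>y'. y' \<in> W2 \<Longrightarrow> \<not> red (({a3, a4, a5, y} - {y}) \<union> {y'})"
proof -
  define W1 where "W1 = W - {w \<in> W. red (insert w {a1, a2, a3})}"
  define W2 where "W2 = W - {w \<in> W. red (insert w {a3, a4, a5})}"
  have card_W1: "card W1 \<ge> card W - 2" and card_W2: "card W2 \<ge> card W - 2"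
    unfolding W1_def W2_def using assms(1,4,5) by (simp_all add: card_without_few_red_extensions)
  then have "0 < card W2" using assms(2) by linarith
  then obtain y where y: "y \<in> W2" by (auto simp: card_gt_0_iff)
  have "card W1 - 1 \<le> card (W1 - {y})" using diff_card_le_card_Diff[of "{y}" W1] by simp
  then have "0 < card (W1 - {y})" using card_W1 assms(2) by linarith
  then obtain x where x: "x \<in> W1" "x \<noteq> y" by (auto simp: card_gt_0_iff)
  have subsets: "W1 \<subseteq> W" "W2 \<subseteq> W" by (auto simp: W1_def W2_def)
  have "x \<notin> {a1, a2, a3}" "y \<notin> {a3, a4, a5}" using x y subsets assms(3) by auto
  then have "({x, a1, a2, a3} - {x}) \<union> {x'} = insert x' {a1, a2, a3}"
    and "({a3, a4, a5, y} - {y}) \<union> {y'} = insert y' {a3, a4, a5}" for x' y'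
    by auto
  then show thesis
    using that[of x y W1 W2] x y subsets card_W1 card_W2
    by (auto simp: W1_def W2_def insert_commute)
qed

lemma maximal_wrt_few_red_extensions_along_reordering:
  assumes lp: "loose_path V vs n" and rp: "red_path red vs n"
    and WV: "W \<subseteq> V - set vs" and mx: "maximal_wrt V red vs n W" and "finite W"
    and j: "1 \<le> j" "j < n"
    and p: "distinct [pa, pb, pc, pd, pe]" "{pa, pb, pc, pd, pe} = {1..5::nat}"
  shows "\<exists>T \<in> {{0, pa, pb}, {pb, pc, pd}, {pd, pe, 6}}.
           few_red_extensions W red ((\<lambda>k. vs ! (3*(j-1) + k)) ` T)"
proof (rule ccontr)
  define u where "u = (\<lambda>k. vs ! (3*(j-1) + k))"
  define R where "R T = {w \<in> W. red (insert w (u ` T))}" for T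
  note window = loose_path_window[OF lp j, folded u_def]
  have u_eq: "u a = u b \<longleftrightarrow> a = b" if "a \<le> 6" "b \<le> 6" for a b
    using inj_on_eq_iff[OF window(1)] that by simp
  have u_in: "u k \<in> set vs" if "k \<le> 6" for k using window(2) that by auto
  have p_range: "pa \<in> {1..5}" "pb \<in> {1..5}" "pc \<in> {1..5}" "pd \<in> {1..5}" "pe \<in> {1..5}"
    using p(2) by blast+
  assume "\<not> ?thesis"
  then have "3 \<le> card (R {0, pa, pb})" "3 \<le> card (R {pb, pc, pd})" "3 \<le> card (R {pd, pe, 6})"
    by (auto simp: few_red_extensions_def R_def u_def)
  moreover have "finite (R T)" for T using \<open>finite W\<close> by (simp add: R_def)
  ultimately obtain z1 z2 z3 where
    z: "z1 \<in> R {0, pa, pb}" "z2 \<in> R {pb, pc, pd}" "z3 \<in> R {pd, pe, 6}" "distinct [z1, z2, z3]"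
    by (metis distinct_representatives_3)
  have z_out: "z1 \<notin> set vs" "z2 \<notin> set vs" "z3 \<notin> set vs" using z WV by (auto simp: R_def)
  define mid where "mid = [u 0, u pa, z1, u pb, u pc, z2, u pd, u pe, z3, u 6]"
  have seg: "take 7 (drop (3*(j-1)) vs) = map u [0..<7]"
    using lp j by (intro nth_equalityI) (auto simp: u_def loose_path_def)
  have "{0..<7} = {0, 6} \<union> {1..5::nat}" by auto
  then have "{0..<7} = {0, pa, pb, pc, pd, pe, 6}" unfolding p(2)[symmetric] by auto
  then have set_seg: "set (take 7 (drop (3*(j-1)) vs)) = {u 0, u pa, u pb, u pc, u pd, u pe, u 6}"
    unfolding seg set_map set_upt by simp
  show False
  proof (rule red_replacement_contradicts_maximal[OF lp rp WV mx j(1), of 2 mid "{z1, z2, z3}"])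
    show "distinct mid"
      using p z(4) z_out u_in p_range by (auto simp: mid_def u_eq)
    show "set mid = set (take (3*2 + 1) (drop (3*(j-1)) vs)) \<union> {z1, z2, z3}"
      using set_seg by (auto simp: mid_def)
    show "red (lp_edge mid i)" if "1 \<le> i" "i \<le> 2 + 1" for i
    proof -
      have "i = 1 \<or> i = 2 \<or> i = 3" using that by auto
      then show ?thesis
        using z by (auto simp: lp_edge_eq_four mid_def R_def insert_commute)
    qed
    show "{z1, z2, z3} \<subseteq> W" using z by (auto simp: R_def)
    show "mid ! 0 = vs ! (3*(j-1))" "mid ! (3*(2+1)) = vs ! (3*(j-1) + 3*2)"
      by (simp_all add: mid_def u_def)
  qed (use j in \<open>simp_all add: mid_def\<close>)
qed

lemma linked_triples_among_three_reorderings: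
  fixes P :: "nat set \<Rightarrow> bool"
  assumes "\<exists>T \<in> {{0, 1, 2}, {2, 4, 3}, {3, 5, 6}}. P T"
    and "\<exists>T \<in> {{0, 1, 5}, {5, 4, 2}, {2, 3, 6}}. P T"
    and "\<exists>T \<in> {{0, 4, 3}, {3, 5, 1}, {1, 2, 6}}. P T"
  shows "\<exists>a b c d e. distinct [a, b, c, d, e] \<and> {a, b, c, d, e} \<subseteq> {0..6} \<and>
           \<not> {4, 5, 6} \<subseteq> {a, b, c, d, e} \<and> P {a, b, c} \<and> P {c, d, e}"
proof -
  have link: "?thesis" if "P {a, b, c}" "P {c, d, e}" "distinct [a, b, c, d, e]"
      "{a, b, c, d, e} \<subseteq> {0..6}" "l \<in> {4, 5, 6}" "l \<notin> {a, b, c, d, e}" for a b c d e l :: nat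
    using that by blast
  \<comment> \<open>every choice of one triple from each hypothesis contains one of these pairs\<close>
  have "P {0, 1, 2} \<Longrightarrow> P {0, 4, 3} \<Longrightarrow> ?thesis"
    by (rule link[of 1 2 0 3 4 5]) (simp_all add: insert_commute)
  moreover have "P {0, 1, 2} \<Longrightarrow> P {3, 5, 1} \<Longrightarrow> ?thesis"
    by (rule link[of 0 2 1 3 5 4]) (simp_all add: insert_commute)
  moreover have "P {0, 1, 2} \<Longrightarrow> P {5, 4, 2} \<Longrightarrow> ?thesis"
    by (rule link[of 0 1 2 4 5 6]) (simp_all add: insert_commute)
  moreover have "P {0, 1, 2} \<Longrightarrow> P {2, 3, 6} \<Longrightarrow> ?thesis"
    by (rule link[of 0 1 2 3 6 4]) (simp_all add: insert_commute)
  moreover have "P {0, 1, 5} \<Longrightarrow> P {1, 2, 6} \<Longrightarrow> ?thesis"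
    by (rule link[of 0 5 1 2 6 4]) (simp_all add: insert_commute)
  moreover have "P {0, 1, 5} \<Longrightarrow> P {0, 4, 3} \<Longrightarrow> ?thesis"
    by (rule link[of 1 5 0 3 4 6]) (simp_all add: insert_commute)
  moreover have "P {0, 1, 5} \<Longrightarrow> P {3, 5, 6} \<Longrightarrow> ?thesis"
    by (rule link[of 3 6 5 0 1 4]) (simp_all add: insert_commute)
  moreover have "P {2, 4, 3} \<Longrightarrow> P {3, 5, 1} \<Longrightarrow> ?thesis"
    by (rule link[of 2 4 3 1 5 6]) (simp_all add: insert_commute)
  moreover have "P {2, 4, 3} \<Longrightarrow> P {1, 2, 6} \<Longrightarrow> ?thesis"
    by (rule link[of 3 4 2 1 6 5]) (simp_all add: insert_commute)
  moreover have "P {5, 4, 2} \<Longrightarrow> P {0, 4, 3} \<Longrightarrow> ?thesis"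
    by (rule link[of 2 5 4 0 3 6]) (simp_all add: insert_commute)
  moreover have "P {5, 4, 2} \<Longrightarrow> P {3, 5, 1} \<Longrightarrow> ?thesis"
    by (rule link[of 2 4 5 1 3 6]) (simp_all add: insert_commute)
  moreover have "P {2, 3, 6} \<Longrightarrow> P {0, 4, 3} \<Longrightarrow> ?thesis"
    by (rule link[of 2 6 3 0 4 5]) (simp_all add: insert_commute)
  moreover have "P {2, 3, 6} \<Longrightarrow> P {3, 5, 1} \<Longrightarrow> ?thesis"
    by (rule link[of 2 6 3 1 5 4]) (simp_all add: insert_commute)
  moreover have "P {3, 5, 6} \<Longrightarrow> P {1, 2, 6} \<Longrightarrow> ?thesis"
    by (rule link[of 3 5 6 1 2 4]) (simp_all add: insert_commute)
  ultimately show ?thesis using assms by auto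
qed

lemma linked_few_red_triples_at_consecutive_edges:
  assumes lp: "loose_path V vs n" and rp: "red_path red vs n"
    and WV: "W \<subseteq> V - set vs" and mx: "maximal_wrt V red vs n W" and finW: "finite W"
    and j: "1 \<le> j" "j < n"
  obtains a1 a2 a3 a4 a5 v where "distinct [a1, a2, a3, a4, a5]"
    and "{a1, a2, a3, a4, a5} \<subseteq> lp_edge vs j \<union> lp_edge vs (j + 1)"
    and "W \<inter> {a1, a2, a3, a4, a5} = {}"
    and "v \<in> lp_edge vs (j + 1) - lp_edge vs j" and "v \<notin> {a1, a2, a3, a4, a5}"
    and "few_red_extensions W red {a1, a2, a3}" and "few_red_extensions W red {a3, a4, a5}"
proof -
  define u where "u = (\<lambda>k. vs ! (3*(j-1) + k))"
  note window = loose_path_window[OF lp j, folded u_def]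
  note reordering = maximal_wrt_few_red_extensions_along_reordering
    [OF lp rp WV mx finW j, folded u_def]
  have "\<exists>T \<in> {{0, 1, 2}, {2, 4, 3}, {3, 5, 6}}. few_red_extensions W red (u ` T)"
    by (rule reordering) auto
  moreover have "\<exists>T \<in> {{0, 1, 5}, {5, 4, 2}, {2, 3, 6}}. few_red_extensions W red (u ` T)"
    by (rule reordering) auto
  moreover have "\<exists>T \<in> {{0, 4, 3}, {3, 5, 1}, {1, 2, 6}}. few_red_extensions W red (u ` T)"
    by (rule reordering) auto
  ultimately have "\<exists>a b c d e. distinct [a, b, c, d, e] \<and> {a, b, c, d, e} \<subseteq> {0..6} \<and>
      \<not> {4, 5, 6} \<subseteq> {a, b, c, d, e} \<and>
      few_red_extensions W red (u ` {a, b, c}) \<and> few_red_extensions W red (u ` {c, d, e})"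
    by (rule linked_triples_among_three_reorderings)
  then obtain a b c d e where abcde: "distinct [a, b, c, d, e]" "{a, b, c, d, e} \<subseteq> {0..6}"
      "\<not> {4, 5, 6} \<subseteq> {a, b, c, d, e}"
      "few_red_extensions W red {u a, u b, u c}" "few_red_extensions W red {u c, u d, u e}"
    by auto
  then obtain l where l: "l \<in> {4, 5, 6}" "l \<notin> {a, b, c, d, e}" by blast
  have "u ` {a, b, c, d, e} \<subseteq> set vs" using abcde(2) window(2) by (meson image_mono order_trans)
  then have disjoint: "W \<inter> {u a, u b, u c, u d, u e} = {}" using WV by auto
  have distinct: "distinct [u a, u b, u c, u d, u e]" and unused: "u l \<notin> {u a, u b, u c, u d, u e}"
    using abcde(1,2) l inj_on_eq_iff[OF window(1)] by auto
  have new: "u l \<in> lp_edge vs (j + 1) - lp_edge vs j"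
    unfolding window(3,4) using l inj_on_eq_iff[OF window(1)] by auto
  have "u ` {a, b, c, d, e} \<subseteq> u ` ({0..3} \<union> {3..6})"
    using abcde(2) by (intro image_mono) auto
  then have within: "{u a, u b, u c, u d, u e} \<subseteq> lp_edge vs j \<union> lp_edge vs (j + 1)"
    unfolding window(3,4) image_Un by simp
  show thesis by (rule that[OF distinct within disjoint new unused abcde(4,5)])
qed

theorem lemma2p3:
  fixes V :: "'a set" and N n :: nat and red :: "'a set \<Rightarrow> bool"
    and vs :: "'a list" and W :: "'a set"
  assumes "finite V" and "card V = N" and "0 < N"
    and "1 \<le> n" and "loose_path V vs n" and "red_path red vs n"
    and "W \<subseteq> V - set vs" and "card W \<ge> 4"
    and "maximal_wrt V red vs n W"
  shows "\<forall>j. 1 \<le> j \<and> j < n \<longrightarrow>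
    (\<exists>x y a1 a2 a3 a4 a5.
       x \<in> W \<and> y \<in> W \<and> x \<noteq> y \<and> distinct [a1, a2, a3, a4, a5] \<and>
       {a1, a2, a3, a4, a5} \<subseteq> lp_edge vs j \<union> lp_edge vs (j + 1) \<and>
       \<not> red {x, a1, a2, a3} \<and> \<not> red {a3, a4, a5, y} \<and>
       (\<exists>v \<in> lp_edge vs (j + 1) - lp_edge vs j. v \<notin> {a1, a2, a3, a4, a5}) \<and>
       (\<exists>W1 W2. W1 \<subseteq> W \<and> W2 \<subseteq> W \<and> card W1 \<ge> card W - 2 \<and> card W2 \<ge> card W - 3 \<and>
          (\<forall>x' \<in> W1. \<forall>y' \<in> W2. x' \<noteq> y' \<longrightarrow>
              \<not> red (({x, a1, a2, a3} - {x}) \<union> {x'}) \<and>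
              \<not> red (({a3, a4, a5, y} - {y}) \<union> {y'}))))"
  apply (intro allI impI)
  subgoal premises j_range for j
  proof -
    have j: "1 \<le> j" "j < n" using j_range by auto
    have finW: "finite W" using assms(1,7) finite_subset by blast
    obtain a1 a2 a3 a4 a5 v where a: "distinct [a1, a2, a3, a4, a5]"
        "{a1, a2, a3, a4, a5} \<subseteq> lp_edge vs j \<union> lp_edge vs (j + 1)"
        "W \<inter> {a1, a2, a3, a4, a5} = {}"
        "v \<in> lp_edge vs (j + 1) - lp_edge vs j" "v \<notin> {a1, a2, a3, a4, a5}"
        "few_red_extensions W red {a1, a2, a3}" "few_red_extensions W red {a3, a4, a5}"
      by (rule linked_few_red_triples_at_consecutive_edges[OF assms(5,6,7,9) finW j])
    obtain x y W1 W2 where xy: "x \<in> W" "y \<in> W" "x \<noteq> y" "\<not> red {x, a1, a2, a3}" "\<not> red {a3, a4, a5, y}"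
      and W12: "W1 \<subseteq> W" "W2 \<subseteq> W" "card W1 \<ge> card W - 2" "card W2 \<ge> card W - 3"
      and blue: "\<And>x'. x' \<in> W1 \<Longrightarrow> \<not> red (({x, a1, a2, a3} - {x}) \<union> {x'})"
        "\<And>y'. y' \<in> W2 \<Longrightarrow> \<not> red (({a3, a4, a5, y} - {y}) \<union> {y'})"
      by (rule blue_two_path_of_few_red_extensions[OF finW assms(8) a(3,6,7)]) blast
    show ?thesis
      by (intro exI[of _ x] exI[of _ y] exI[of _ a1] exI[of _ a2] exI[of _ a3] exI[of _ a4]
          exI[of _ a5] exI[of _ W1] exI[of _ W2] conjI bexI[of _ v] ballI impI)
        (fact xy a W12 | erule blue)+
  qed
  done

end
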